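(* Let $j$ be a divisor of $n$ with $1\le j\le n-1$, and let $0\leq i\leq n-1$. If $\gcd(i,n)=\gcd(i,j)$, or $\gcd(i,n)$ divides $j$, then there exists $N\geq 0$ with $c_i^N\in R_jA$.
   Context: $\Bbbk$ is an algebraically closed field of characteristic zero, $n\ge2$, $A=\Bbbk_{-1}[x_0,\dots,x_{n-1}]$ is generated by degree-one $x_0,\dots,x_{n-1}$ with $x_ix_j=-x_jx_i$ ($i\ne j$), $C_n=\langle\sigma\rangle$ acts by $\sigma(x_i)=x_{i+1}$ (indices in $\mathbb{Z}_n$). Let $\omega$ be a primitive $n$th root of unity, $b_\gamma=\frac1n\sum_{i=0}^{n-1}\omega^{i\gamma}x_i$, and $c_k=b_lb_{k-l}+b_{k-l}b_l$ (independent of $l$) for $k\in\mathbb{Z}_n$. $R_j=\{a\in A\mid\sigma(a)=\omega^{-j}a\}$ and $R_jA$ is the right ideal of $A$ generated by $R_j$. Here $\gcd(0,n)=n$. *)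

theory Defs
  imports "HOL-Computational_Algebra.Polynomial"
begin

text \<open>The skew polynomial ring A = k_{-1}[x_0,...,x_{n-1}].
  An element is a coefficient function on exponent vectors (monomials)
  a :: nat => nat, where a stands for the ordered monomial
  x_0^(a 0) * ... * x_{n-1}^(a (n-1)).\<close>

definition skA :: "nat \<Rightarrow> ((nat \<Rightarrow> nat) \<Rightarrow> 'k::field) set" where
  "skA n = {f. finite {a. f a \<noteq> 0} \<and> (\<forall>a. f a \<noteq> 0 \<longrightarrow> (\<forall>i\<ge>n. a i = 0))}"

text \<open>Sign of x^a * x^b = (-1)^(sum_{i>j} a_i b_j) x^(a+b).\<close>
definition sksign :: "nat \<Rightarrow> (nat \<Rightarrow> nat) \<Rightarrow> (nat \<Rightarrow> nat) \<Rightarrow> 'k::field" where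
  "sksign n a b = (-1) ^ (\<Sum>i<n. \<Sum>j<i. a i * b j)"

definition skmul :: "nat \<Rightarrow> ((nat \<Rightarrow> nat) \<Rightarrow> 'k::field) \<Rightarrow> ((nat \<Rightarrow> nat) \<Rightarrow> 'k) \<Rightarrow> ((nat \<Rightarrow> nat) \<Rightarrow> 'k)" where
  "skmul n f g = (\<lambda>c. \<Sum>p \<in> {p. f (fst p) \<noteq> 0 \<and> g (snd p) \<noteq> 0 \<and> (\<lambda>i. fst p i + snd p i) = c}.
      sksign n (fst p) (snd p) * f (fst p) * g (snd p))"

definition skone :: "(nat \<Rightarrow> nat) \<Rightarrow> 'k::field" where
  "skone = (\<lambda>c. if c = (\<lambda>i. 0) then 1 else 0)"

definition skpow :: "nat \<Rightarrow> ((nat \<Rightarrow> nat) \<Rightarrow> 'k::field) \<Rightarrow> nat \<Rightarrow> ((nat \<Rightarrow> nat) \<Rightarrow> 'k)" where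
  "skpow n f N = (skmul n f ^^ N) skone"

definition skx :: "nat \<Rightarrow> (nat \<Rightarrow> nat) \<Rightarrow> 'k::field" where
  "skx i = (\<lambda>c. if c = (\<lambda>k. if k = i then 1 else 0) then 1 else 0)"

definition skb :: "nat \<Rightarrow> 'k::field \<Rightarrow> nat \<Rightarrow> (nat \<Rightarrow> nat) \<Rightarrow> 'k" where
  "skb n \<omega> \<gamma> = (\<lambda>c. inverse (of_nat n) * (\<Sum>i<n. \<omega> ^ (i * \<gamma>) * skx i c))"

text \<open>c_k = b_l b_{k-l} + b_{k-l} b_l, taken with l = 0.\<close>
definition skc :: "nat \<Rightarrow> 'k::field \<Rightarrow> nat \<Rightarrow> (nat \<Rightarrow> nat) \<Rightarrow> 'k" where
  "skc n \<omega> k = (\<lambda>c. skmul n (skb n \<omega> 0) (skb n \<omega> k) c + skmul n (skb n \<omega> k) (skb n \<omega> 0) c)"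

text \<open>The automorphism sigma(x_i) = x_{i+1 mod n}:
  sigma(x^a) = x_1^(a_0) ... x_{n-1}^(a_{n-2}) x_0^(a_{n-1})
             = (-1)^(a_{n-1} (a_0+...+a_{n-2})) x^(shift a).\<close>
definition sksigma :: "nat \<Rightarrow> ((nat \<Rightarrow> nat) \<Rightarrow> 'k::field) \<Rightarrow> ((nat \<Rightarrow> nat) \<Rightarrow> 'k)" where
  "sksigma n f = (\<lambda>c. if (\<forall>i\<ge>n. c i = 0)
      then (-1) ^ (c 0 * (\<Sum>i\<in>{1..<n}. c i)) * f (\<lambda>i. if i < n then c ((i + 1) mod n) else 0)
      else 0)"

definition skR :: "nat \<Rightarrow> 'k::field \<Rightarrow> nat \<Rightarrow> ((nat \<Rightarrow> nat) \<Rightarrow> 'k) set" where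
  "skR n \<omega> j = {a \<in> skA n. sksigma n a = (\<lambda>c. inverse (\<omega> ^ j) * a c)}"

definition skRideal :: "nat \<Rightarrow> ((nat \<Rightarrow> nat) \<Rightarrow> 'k::field) set \<Rightarrow> ((nat \<Rightarrow> nat) \<Rightarrow> 'k) set" where
  "skRideal n S = {f. \<exists>(m::nat) rs bs. (\<forall>k<m. rs k \<in> S \<and> bs k \<in> skA n) \<and>
       f = (\<lambda>c. \<Sum>k<m. skmul n (rs k) (bs k) c)}"

end

theory Submission
  imports Defs "HOL-Number_Theory.Cong"
begin

text \<open>Anticommutativity kills the cross terms of c_i = b_0 b_i + b_i b_0, leaving
  c_i = (2/n^2) \<Sum>_a \<omega>^(a i) x_a^2. Elements supported on monomials with even exponents
  multiply without signs, and \<sigma> acts on them merely by permuting exponent vectors; so c_i is a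
  \<sigma>-eigenvector with eigenvalue \<omega>^(-i), and c_i^N one with eigenvalue \<omega>^(-i N). Since
  gcd(i, n) divides j, some N satisfies i N = j (mod n), and then c_i^N already lies in
  R_j \<subseteq> R_j A.\<close>

definition skeven :: "((nat \<Rightarrow> nat) \<Rightarrow> 'k::field) \<Rightarrow> bool" where
  "skeven f \<longleftrightarrow> (\<forall>a k. f a \<noteq> 0 \<longrightarrow> even (a k))"

lemma sksign_even_left: "(\<And>k. even (a k)) \<Longrightarrow> sksign n a b = 1"
  unfolding sksign_def by (simp add: dvd_sum)

lemma skmul_nonzeroE:
  assumes "skmul n f g c \<noteq> 0"
  obtains a b where "f a \<noteq> 0" "g b \<noteq> 0" "c = (\<lambda>i. a i + b i)"
proof -
  have "{p. f (fst p) \<noteq> 0 \<and> g (snd p) \<noteq> 0 \<and> (\<lambda>i. fst p i + snd p i) = c} \<noteq> {}"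
    using assms unfolding skmul_def by force
  then show thesis using that by auto
qed

lemma skmul_in_skA:
  assumes "f \<in> skA n" "g \<in> skA n"
  shows "skmul n f g \<in> skA n"
proof -
  let ?F = "{a. f a \<noteq> 0}" and ?G = "{b. g b \<noteq> 0}"
  have "{c. skmul n f g c \<noteq> 0} \<subseteq> (\<lambda>(a, b) i. a i + b i) ` (?F \<times> ?G)"
  proof
    fix c assume "c \<in> {c. skmul n f g c \<noteq> 0}"
    then obtain a b where "f a \<noteq> 0" "g b \<noteq> 0" "c = (\<lambda>i. a i + b i)"
      by (auto elim: skmul_nonzeroE)
    then show "c \<in> (\<lambda>(a, b) i. a i + b i) ` (?F \<times> ?G)" by force
  qed
  moreover have "finite (?F \<times> ?G)"
    using assms unfolding skA_def by auto
  ultimately have "finite {c. skmul n f g c \<noteq> 0}"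
    using finite_subset by blast
  moreover have "c i = 0" if "skmul n f g c \<noteq> 0" "n \<le> i" for c i
    using that(1) by (rule skmul_nonzeroE) (use assms that(2) in \<open>simp add: skA_def\<close>)
  ultimately show ?thesis unfolding skA_def by blast
qed

lemma skeven_skmul: "skeven f \<Longrightarrow> skeven g \<Longrightarrow> skeven (skmul n f g)"
  unfolding skeven_def by (metis skmul_nonzeroE even_add)

lemma skone_in_skA: "skone \<in> skA n"
  unfolding skA_def skone_def by auto

lemma skeven_skone: "skeven skone"
  unfolding skeven_def skone_def by auto

lemma skmul_skone_right: "skmul n f skone = f"
proof
  fix c
  have "{p. f (fst p) \<noteq> 0 \<and> skone (snd p) \<noteq> (0::'a) \<and> (\<lambda>i. fst p i + snd p i) = c}
      = (if f c \<noteq> 0 then {(c, \<lambda>i. 0)} else {})"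
    unfolding skone_def by auto
  then show "skmul n f skone c = f c"
    unfolding skmul_def by (simp add: sksign_def skone_def)
qed

lemma skmul_skeven_left:
  assumes "skeven f"
  shows "skmul n f g c = (\<Sum>p \<in> {p. f (fst p) \<noteq> 0 \<and> g (snd p) \<noteq> 0 \<and> (\<lambda>i. fst p i + snd p i) = c}.
           f (fst p) * g (snd p))"
  unfolding skmul_def using assms by (intro sum.cong) (auto simp: skeven_def sksign_even_left)

lemma skmul_comp_bij:
  assumes \<pi>: "bij \<pi>" and "skeven f"
    and f: "\<And>a. f (a \<circ> \<pi>) = \<mu> * f a" and g: "\<And>b. g (b \<circ> \<pi>) = \<nu> * g b"
    and "\<mu> \<noteq> 0" "\<nu> \<noteq> 0"
  shows "skmul n f g (c \<circ> \<pi>) = \<mu> * \<nu> * skmul n f g c"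
proof -
  define Q where "Q c = {p. f (fst p) \<noteq> 0 \<and> g (snd p) \<noteq> 0 \<and> (\<lambda>i. fst p i + snd p i) = c}" for c
  define lift where "lift \<rho> p = (fst p \<circ> \<rho>, snd p \<circ> \<rho>)"
    for \<rho> :: "nat \<Rightarrow> nat" and p :: "(nat \<Rightarrow> nat) \<times> (nat \<Rightarrow> nat)"
  have inv_cancel: "x \<circ> inv \<pi> \<circ> \<pi> = x" "x \<circ> \<pi> \<circ> inv \<pi> = x" for x :: "nat \<Rightarrow> nat"
    using \<pi> by (simp_all add: bij_is_inj bij_is_surj surj_iff[THEN iffD1] o_assoc[symmetric])
  have f_iff: "f (a \<circ> \<pi>) \<noteq> 0 \<longleftrightarrow> f a \<noteq> 0" and g_iff: "g (a \<circ> \<pi>) \<noteq> 0 \<longleftrightarrow> g a \<noteq> 0" for a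
    using f g assms(5,6) by auto
  have sum_comp: "(\<lambda>i. (a \<circ> \<rho>) i + (b \<circ> \<rho>) i) = (\<lambda>i. a i + b i) \<circ> \<rho>" for a b \<rho>
    by auto
  have "skmul n f g (c \<circ> \<pi>) = (\<Sum>p\<in>Q (c \<circ> \<pi>). f (fst p) * g (snd p))"
    unfolding Q_def by (rule skmul_skeven_left[OF \<open>skeven f\<close>])
  also have "\<dots> = (\<Sum>p\<in>Q c. f (fst p \<circ> \<pi>) * g (snd p \<circ> \<pi>))"
  proof (rule sum.reindex_bij_witness[where i = "lift \<pi>" and j = "lift (inv \<pi>)"])
    show "lift \<pi> (lift (inv \<pi>) p) = p" "lift (inv \<pi>) (lift \<pi> q) = q" for p q
      by (simp_all add: lift_def inv_cancel)
    show "lift (inv \<pi>) p \<in> Q c" if "p \<in> Q (c \<circ> \<pi>)" for p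
    proof -
      obtain a b where p: "p = (a, b)" by fastforce
      have "f a \<noteq> 0" "g b \<noteq> 0" and ab: "(\<lambda>i. a i + b i) = c \<circ> \<pi>"
        using that unfolding Q_def p by auto
      then have "f (a \<circ> inv \<pi>) \<noteq> 0" "g (b \<circ> inv \<pi>) \<noteq> 0"
        using f_iff[of "a \<circ> inv \<pi>"] g_iff[of "b \<circ> inv \<pi>"] by (simp_all add: inv_cancel)
      moreover have "(\<lambda>i. (a \<circ> inv \<pi>) i + (b \<circ> inv \<pi>) i) = c"
        unfolding sum_comp ab by (rule inv_cancel)
      ultimately show ?thesis unfolding Q_def lift_def p by simp
    qed
    show "lift \<pi> p \<in> Q (c \<circ> \<pi>)" if "p \<in> Q c" for p
      using that f_iff g_iff unfolding Q_def lift_def by (auto simp: sum_comp)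
  qed (simp add: lift_def inv_cancel)
  also have "\<dots> = \<mu> * \<nu> * skmul n f g c"
    unfolding skmul_skeven_left[OF \<open>skeven f\<close>] Q_def by (simp add: f g sum_distrib_left ac_simps)
  finally show ?thesis .
qed

lemma comp_surj_eq_iff:
  assumes "surj \<pi>"
  shows "x \<circ> \<pi> = y \<circ> \<pi> \<longleftrightarrow> x = y"
proof
  assume eq: "x \<circ> \<pi> = y \<circ> \<pi>"
  show "x = y"
  proof
    fix z
    obtain w where "z = \<pi> w" using surjD[OF assms] by blast
    then show "x z = y z" using fun_cong[OF eq, of w] by simp
  qed
qed simp

lemma skone_comp_surj:
  assumes "surj \<pi>"
  shows "skone (c \<circ> \<pi>) = skone c"
proof -
  have "c = (\<lambda>i. 0)" if "c \<circ> \<pi> = (\<lambda>i. 0)"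
  proof
    fix z
    obtain w where "z = \<pi> w" using surjD[OF assms] by blast
    then show "c z = 0" using fun_cong[OF that, of w] by simp
  qed
  then show ?thesis unfolding skone_def by auto
qed

lemma skpow_0: "skpow n f 0 = skone"
  unfolding skpow_def by simp

lemma skpow_Suc: "skpow n f (Suc N) = skmul n f (skpow n f N)"
  unfolding skpow_def by simp

lemma skpow_in_skA: "f \<in> skA n \<Longrightarrow> skpow n f N \<in> skA n"
  by (induction N) (simp_all add: skpow_0 skpow_Suc skone_in_skA skmul_in_skA)

lemma skeven_skpow: "skeven f \<Longrightarrow> skeven (skpow n f N)"
  by (induction N) (simp_all add: skpow_0 skpow_Suc skeven_skone skeven_skmul)

lemma skpow_comp_bij:
  assumes "bij \<pi>" "skeven f" "\<And>a. f (a \<circ> \<pi>) = \<mu> * f a" "\<mu> \<noteq> 0"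
  shows "skpow n f N (c \<circ> \<pi>) = \<mu> ^ N * skpow n f N c"
proof (induction N arbitrary: c)
  case 0
  show ?case
    unfolding skpow_0 power_0 mult_1_left by (rule skone_comp_surj[OF bij_is_surj[OF assms(1)]])
next
  case (Suc N)
  have "\<mu> ^ N \<noteq> 0" using assms(4) by simp
  from skmul_comp_bij[where g = "skpow n f N", OF assms(1-3) Suc assms(4) this]
  show ?case unfolding skpow_Suc power_Suc .
qed

text \<open>The index shift i \<mapsto> i + 1 mod n of \<sigma>, extended by the identity beyond n so that it
  is a permutation of all of nat.\<close>

definition cyc :: "nat \<Rightarrow> nat \<Rightarrow> nat" where
  "cyc n i = (if i < n then Suc i mod n else i)"

lemma inj_on_cyc: "inj_on (cyc n) {..<n}"
proof (rule inj_onI)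
  fix x y assume "x \<in> {..<n}" "y \<in> {..<n}" "cyc n x = cyc n y"
  then have "Suc x mod n = Suc y mod n" "x < n" "y < n" by (simp_all add: cyc_def)
  moreover have "Suc z mod n = (if Suc z = n then 0 else Suc z)" if "z < n" for z
    using that by auto
  ultimately show "x = y" by (auto split: if_splits)
qed

lemma cyc_image: "cyc n ` {..<n} = {..<n}"
  by (rule endo_inj_surj) (auto simp: cyc_def inj_on_cyc)

lemma bij_betw_cyc: "bij_betw (cyc n) {..<n} {..<n}"
  unfolding bij_betw_def by (simp add: inj_on_cyc cyc_image)

lemma bij_cyc: "bij (cyc n)"
proof (rule bijI)
  show "inj (cyc n)"
  proof (rule injI)
    fix x y assume eq: "cyc n x = cyc n y"
    have "cyc n z < n \<longleftrightarrow> z < n" for z by (simp add: cyc_def)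
    then consider "x < n" "y < n" | "\<not> x < n" "\<not> y < n" using eq by metis
    then show "x = y"
      by cases (use eq inj_on_cyc in \<open>auto simp: inj_on_def cyc_def\<close>)
  qed
  show "surj (cyc n)"
  proof (rule surjI)
    fix y
    show "cyc n (if y < n then inv_into {..<n} (cyc n) y else y) = y"
    proof (cases "y < n")
      case True
      then have "y \<in> cyc n ` {..<n}" by (simp add: cyc_image)
      then show ?thesis using True by (simp add: f_inv_into_f)
    qed (simp add: cyc_def)
  qed
qed

lemma skA_vanish: "f \<in> skA n \<Longrightarrow> n \<le> i \<Longrightarrow> a i \<noteq> 0 \<Longrightarrow> f a = 0"
  unfolding skA_def by auto

lemma sksigma_skeven:
  assumes "0 < n" "f \<in> skA n" "skeven f"
  shows "sksigma n f = (\<lambda>c. f (c \<circ> cyc n))"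
proof
  fix c
  show "sksigma n f c = f (c \<circ> cyc n)"
  proof (cases "\<forall>i\<ge>n. c i = 0")
    case True
    have rot: "(\<lambda>i. if i < n then c ((i + 1) mod n) else 0) = c \<circ> cyc n"
    proof
      fix i
      show "(if i < n then c ((i + 1) mod n) else 0) = (c \<circ> cyc n) i"
        using True by (simp add: cyc_def)
    qed
    have last: "(c \<circ> cyc n) (n - 1) = c 0" using assms(1) by (simp add: cyc_def)
    show ?thesis
    proof (cases "f (c \<circ> cyc n) = 0")
      case False
      then have "even ((c \<circ> cyc n) (n - 1))" using assms(3) unfolding skeven_def by blast
      then have "even (c 0 * (\<Sum>i\<in>{1..<n}. c i))" unfolding last by simp
      then show ?thesis unfolding sksigma_def rot using True by simp
    next
      case True
      then show ?thesis by (simp add: sksigma_def rot)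
    qed
  next
    case False
    then obtain i where i: "n \<le> i" "c i \<noteq> 0" by auto
    then have "(c \<circ> cyc n) i \<noteq> 0" by (simp add: cyc_def)
    then have "f (c \<circ> cyc n) = 0" by (rule skA_vanish[OF assms(2) i(1)])
    moreover have "sksigma n f c = 0" unfolding sksigma_def using False by (subst if_not_P) auto
    ultimately show ?thesis by simp
  qed
qed

lemma mem_skRideal: "r \<in> S \<Longrightarrow> r \<in> skRideal n S"
  unfolding skRideal_def
  by (rule CollectI, rule exI[of _ 1], rule exI[of _ "\<lambda>_. r"], rule exI[of _ "\<lambda>_. skone"])
     (simp add: skone_in_skA skmul_skone_right)

lemma power_mod_root_of_unity:
  fixes \<omega> :: "'a::monoid_mult"
  assumes "\<omega> ^ n = 1"
  shows "\<omega> ^ (m mod n) = \<omega> ^ m"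
proof -
  have "\<omega> ^ m = \<omega> ^ (n * (m div n) + m mod n)" by simp
  also have "\<dots> = (\<omega> ^ n) ^ (m div n) * \<omega> ^ (m mod n)" by (simp only: power_add power_mult)
  finally show ?thesis using assms by simp
qed

definition unit_exp :: "nat \<Rightarrow> nat \<Rightarrow> nat" where
  "unit_exp a = (\<lambda>k. if k = a then 1 else 0)"

definition sklin :: "nat \<Rightarrow> (nat \<Rightarrow> 'k::field) \<Rightarrow> (nat \<Rightarrow> nat) \<Rightarrow> 'k" where
  "sklin n u = (\<lambda>c. \<Sum>a<n. u a * skx a c)"

definition sksumsq :: "nat \<Rightarrow> (nat \<Rightarrow> 'k::field) \<Rightarrow> (nat \<Rightarrow> nat) \<Rightarrow> 'k" where
  "sksumsq n w = (\<lambda>c. \<Sum>a<n. if (\<lambda>k. 2 * unit_exp a k) = c then w a else 0)"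

lemma unit_exp_eq_iff: "unit_exp a = unit_exp b \<longleftrightarrow> a = b"
proof
  assume "unit_exp a = unit_exp b"
  from fun_cong[OF this, of a] show "a = b" by (simp add: unit_exp_def split: if_splits)
qed simp

lemma skx_unit_exp: "skx a c = (if c = unit_exp a then 1 else 0)"
  unfolding skx_def unit_exp_def by simp

lemma sklin_support: "{c. sklin n u c \<noteq> 0} \<subseteq> unit_exp ` {..<n}"
proof
  fix c assume "c \<in> {c. sklin n u c \<noteq> 0}"
  then obtain a where "a \<in> {..<n}" "u a * skx a c \<noteq> 0"
    unfolding sklin_def by (auto elim: sum.not_neutral_contains_not_neutral)
  then show "c \<in> unit_exp ` {..<n}" by (auto simp: skx_unit_exp split: if_splits)
qed

lemma sklin_unit_exp:
  assumes "a < n"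
  shows "sklin n u (unit_exp a) = u a"
proof -
  have "sklin n u (unit_exp a) = (\<Sum>b<n. if b = a then u b else 0)"
    unfolding sklin_def skx_unit_exp by (intro sum.cong) (auto simp: unit_exp_eq_iff)
  then show ?thesis using assms by simp
qed

lemma sksign_unit_exp:
  assumes "a < n" "b < n"
  shows "sksign n (unit_exp a) (unit_exp b) = (if b < a then -1 else 1)"
proof -
  have "(\<Sum>i<n. \<Sum>j<i. unit_exp a i * unit_exp b j) = (\<Sum>i<n. if i = a then of_bool (b < a) else 0)"
    by (rule sum.cong) (auto simp: unit_exp_def)
  also have "\<dots> = of_bool (b < a)" using assms(1) by simp
  finally show ?thesis unfolding sksign_def by simp
qed

lemma skmul_eq_sum_supersets:
  assumes "finite S" "finite T" "{a. f a \<noteq> 0} \<subseteq> S" "{b. g b \<noteq> 0} \<subseteq> T"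
  shows "skmul n f g c =
    (\<Sum>a\<in>S. \<Sum>b\<in>T. if (\<lambda>i. a i + b i) = c then sksign n a b * f a * g b else 0)"
proof -
  have "skmul n f g c = (\<Sum>p\<in>S \<times> T. if (\<lambda>i. fst p i + snd p i) = c
          then sksign n (fst p) (snd p) * f (fst p) * g (snd p) else 0)"
    unfolding skmul_def by (rule sum.mono_neutral_cong_left) (use assms in auto)
  then show ?thesis by (simp add: sum.cartesian_product case_prod_beta)
qed

lemma skmul_sklin:
  "skmul n (sklin n u) (sklin n v) c =
    (\<Sum>a<n. \<Sum>b<n. if (\<lambda>k. unit_exp a k + unit_exp b k) = c
       then (if b < a then -1 else 1) * u a * v b else 0)"
proof -
  have inj: "inj_on unit_exp {..<n}" by (simp add: inj_on_def unit_exp_eq_iff)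
  have "skmul n (sklin n u) (sklin n v) c =
     (\<Sum>x\<in>unit_exp ` {..<n}. \<Sum>y\<in>unit_exp ` {..<n}. if (\<lambda>i. x i + y i) = c
        then sksign n x y * sklin n u x * sklin n v y else 0)"
    by (rule skmul_eq_sum_supersets) (simp_all add: sklin_support)
  also have "\<dots> = (\<Sum>a<n. \<Sum>b<n. if (\<lambda>i. unit_exp a i + unit_exp b i) = c
        then sksign n (unit_exp a) (unit_exp b) * sklin n u (unit_exp a) * sklin n v (unit_exp b) else 0)"
    by (simp add: sum.reindex[OF inj])
  also have "\<dots> = (\<Sum>a<n. \<Sum>b<n. if (\<lambda>k. unit_exp a k + unit_exp b k) = c
       then (if b < a then -1 else 1) * u a * v b else 0)"
    by (intro sum.cong refl) (simp add: sksign_unit_exp sklin_unit_exp)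
  finally show ?thesis .
qed

lemma sklin_anticommutator:
  "skmul n (sklin n u) (sklin n v) c + skmul n (sklin n v) (sklin n u) c
     = sksumsq n (\<lambda>a. 2 * u a * v a) c"
proof -
  define E where "E a b = (\<lambda>k. unit_exp a k + unit_exp b k)" for a b
  define s where "s a b = (if b < a then -1 else 1 :: 'a)" for a b :: nat
  have E_swap: "E b a = E a b" for a b unfolding E_def by (simp add: add.commute)
  have s_swap: "s a b + s b a = (if a = b then 2 else 0)" for a b unfolding s_def by auto
  have uv: "skmul n (sklin n u) (sklin n v) c
      = (\<Sum>a<n. \<Sum>b<n. if E a b = c then s a b * u a * v b else 0)"
    unfolding skmul_sklin E_def s_def ..
  have "skmul n (sklin n v) (sklin n u) c
      = (\<Sum>b<n. \<Sum>a<n. if E b a = c then s b a * v b * u a else 0)"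
    unfolding skmul_sklin E_def s_def ..
  also have "\<dots> = (\<Sum>a<n. \<Sum>b<n. if E a b = c then s b a * u a * v b else 0)"
    by (subst sum.swap, intro sum.cong refl) (simp add: E_swap mult_ac)
  finally have vu: "skmul n (sklin n v) (sklin n u) c
      = (\<Sum>a<n. \<Sum>b<n. if E a b = c then s b a * u a * v b else 0)" .
  have "skmul n (sklin n u) (sklin n v) c + skmul n (sklin n v) (sklin n u) c
      = (\<Sum>a<n. \<Sum>b<n. if E a b = c then (s a b + s b a) * u a * v b else 0)"
    unfolding uv vu sum.distrib[symmetric] by (intro sum.cong refl) (simp add: distrib_right)
  also have "\<dots> = (\<Sum>a<n. \<Sum>b<n. if b = a then (if E a a = c then 2 * u a * v a else 0) else 0)"
  proof (intro sum.cong refl)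
    show "(if E a b = c then (s a b + s b a) * u a * v b else 0)
        = (if b = a then (if E a a = c then 2 * u a * v a else 0) else 0)" for a b
      unfolding s_swap by (cases "b = a") simp_all
  qed
  also have "\<dots> = (\<Sum>a<n. if E a a = c then 2 * u a * v a else 0)"
    by (intro sum.cong refl) simp
  also have "\<dots> = sksumsq n (\<lambda>a. 2 * u a * v a) c"
    by (simp only: sksumsq_def E_def mult_2)
  finally show ?thesis .
qed

lemma skb_eq_sklin: "skb n \<omega> \<gamma> = sklin n (\<lambda>a. inverse (of_nat n) * \<omega> ^ (a * \<gamma>))"
  unfolding skb_def sklin_def by (simp add: sum_distrib_left mult.assoc)

lemma skc_eq_sksumsq:
  "skc n \<omega> k = sksumsq n (\<lambda>a. 2 * inverse (of_nat n) ^ 2 * \<omega> ^ (a * k))"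
  unfolding skc_def skb_eq_sklin sklin_anticommutator by (simp add: power2_eq_square mult_ac)

lemma sksumsq_nonzeroE:
  assumes "sksumsq n w c \<noteq> 0"
  obtains a where "a < n" "c = (\<lambda>k. 2 * unit_exp a k)"
  using assms unfolding sksumsq_def
  by (auto elim: sum.not_neutral_contains_not_neutral split: if_splits)

lemma sksumsq_in_skA: "sksumsq n w \<in> skA n"
proof -
  have "{c. sksumsq n w c \<noteq> 0} \<subseteq> (\<lambda>a k. 2 * unit_exp a k) ` {..<n}"
    by (auto elim: sksumsq_nonzeroE)
  then have "finite {c. sksumsq n w c \<noteq> 0}" by (rule finite_surj[OF finite_lessThan])
  then show ?thesis unfolding skA_def by (auto elim!: sksumsq_nonzeroE simp: unit_exp_def)
qed

lemma skeven_sksumsq: "skeven (sksumsq n w)"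
  unfolding skeven_def by (auto elim!: sksumsq_nonzeroE)

lemma sksumsq_comp_cyc:
  assumes "\<And>a. a < n \<Longrightarrow> w a = \<mu> * w (cyc n a)"
  shows "sksumsq n w (c \<circ> cyc n) = \<mu> * sksumsq n w c"
proof -
  define D where "D a = (\<lambda>k. 2 * unit_exp a k)" for a
  have "D (cyc n a) \<circ> cyc n = D a" for a
  proof
    fix k
    have "cyc n k = cyc n a \<longleftrightarrow> k = a" using bij_is_inj[OF bij_cyc] by (simp add: inj_eq)
    then show "(D (cyc n a) \<circ> cyc n) k = D a k" by (simp add: D_def unit_exp_def)
  qed
  then have match: "D a = c \<circ> cyc n \<longleftrightarrow> D (cyc n a) = c" for a
    using comp_surj_eq_iff[OF bij_is_surj[OF bij_cyc[of n]], where x = "D (cyc n a)" and y = c] by simp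
  have "sksumsq n w (c \<circ> cyc n) = (\<Sum>a<n. if D a = c \<circ> cyc n then w a else 0)"
    unfolding sksumsq_def D_def ..
  also have "\<dots> = (\<Sum>a<n. \<mu> * (if D (cyc n a) = c then w (cyc n a) else 0))"
    by (intro sum.cong refl) (simp add: match assms)
  also have "\<dots> = \<mu> * (\<Sum>a<n. if D a = c then w a else 0)"
    using sum.reindex_bij_betw[OF bij_betw_cyc, where g = "\<lambda>a. if D a = c then w a else 0"]
    by (simp add: sum_distrib_left[symmetric])
  also have "\<dots> = \<mu> * sksumsq n w c"
    unfolding sksumsq_def D_def ..
  finally show ?thesis .
qed

lemma skc_comp_cyc:
  fixes \<omega> :: "'k::field"
  assumes "0 < n" "\<omega> ^ n = 1"
  shows "skc n \<omega> k (c \<circ> cyc n) = inverse (\<omega> ^ k) * skc n \<omega> k c"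
  unfolding skc_eq_sksumsq
proof (rule sksumsq_comp_cyc)
  fix a assume "a < n"
  have "\<omega> \<noteq> 0" using assms by (cases "\<omega> = 0") (simp_all add: power_0_left)
  have "\<omega> ^ (cyc n a * k) = \<omega> ^ (Suc a mod n * k)" using \<open>a < n\<close> by (simp add: cyc_def)
  also have "\<dots> = (\<omega> * \<omega> ^ a) ^ k"
    using power_mod_root_of_unity[OF assms(2), of "Suc a"] by (simp add: power_mult)
  also have "\<dots> = \<omega> ^ (a * k) * \<omega> ^ k"
    by (simp add: power_mult power_mult_distrib mult.commute)
  finally show "2 * inverse (of_nat n) ^ 2 * \<omega> ^ (a * k)
      = inverse (\<omega> ^ k) * (2 * inverse (of_nat n) ^ 2 * \<omega> ^ (cyc n a * k))"
    using \<open>\<omega> \<noteq> 0\<close> by (simp add: field_simps)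
qed

theorem lemma5p4:
  fixes \<omega> :: "'k::field_char_0" and n i j :: nat
  assumes alg_closed: "\<forall>p :: 'k poly. degree p > 0 \<longrightarrow> (\<exists>x. poly p x = 0)"
    and n2: "n \<ge> 2"
    and prim: "\<omega> ^ n = 1" "\<forall>k. 0 < k \<and> k < n \<longrightarrow> \<omega> ^ k \<noteq> 1"
    and jdvd: "j dvd n" and j1: "1 \<le> j" and jn: "j \<le> n - 1"
    and i_lt: "i < n"
    and hyp: "gcd i n = gcd i j \<or> gcd i n dvd j"
  shows "\<exists>N. skpow n (skc n \<omega> i) N \<in> skRideal n (skR n \<omega> j)"
proof -
  have n: "0 < n" using n2 by simp
  have "\<omega> \<noteq> 0" using prim(1) n by (cases "\<omega> = 0") (simp_all add: power_0_left)
  have "gcd i n dvd j" using hyp by auto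
  then obtain N where "[i * N = j] (mod n)" using cong_solve_dvd_nat by blast
  then have \<omega>N: "\<omega> ^ (i * N) = \<omega> ^ j"
    unfolding cong_def by (metis power_mod_root_of_unity[OF prim(1)])
  let ?P = "skpow n (skc n \<omega> i) N"
  have c_in_skA: "skc n \<omega> i \<in> skA n" and c_even: "skeven (skc n \<omega> i)"
    unfolding skc_eq_sksumsq by (rule sksumsq_in_skA, rule skeven_sksumsq)
  have P_in_skA: "?P \<in> skA n" using skpow_in_skA[OF c_in_skA] .
  have "?P (c \<circ> cyc n) = inverse (\<omega> ^ j) * ?P c" for c
    using skpow_comp_bij[OF bij_cyc c_even skc_comp_cyc[OF n prim(1)]] \<open>\<omega> \<noteq> 0\<close>
    by (simp add: \<omega>N[symmetric] power_mult power_inverse)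
  then have "sksigma n ?P = (\<lambda>c. inverse (\<omega> ^ j) * ?P c)"
    using sksigma_skeven[OF n P_in_skA skeven_skpow[OF c_even]] by simp
  then have "?P \<in> skR n \<omega> j" using P_in_skA unfolding skR_def by simp
  then show ?thesis using mem_skRideal by blast
qed

end
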